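(* Let $n\ge 3$ and let $(u,v)$ be an MAB pair of binary words with $|u|=|v|=n$, $i=\mathrm{lsb}(u,v)$, $j=\mathrm{lsb}(v,u)$ and $i+j>n$. Write $u=\alpha\gamma\beta$ and $v=\beta'\gamma'\alpha'$ with $|\alpha|=|\alpha'|=n-i$, $|\gamma|=|\gamma'|=i+j-n$ and $|\beta|=|\beta'|=n-j$ (so that $\mathrm{sb}(u,v)=(\gamma\beta,\beta'\gamma')$ and $\mathrm{sb}(v,u)=(\gamma'\alpha',\alpha\gamma)$). Then $\big||\alpha|_c-|\alpha'|_c\big|=1$ for all $c\in\{a,b\}$ if and only if $i+j-n=1$.
   Context: Let $\Sigma=\{a,b\}$. For a word $w$ and a letter $c$, $|w|_c$ denotes the number of occurrences of $c$ in $w$. Two words $x,y$ are abelian equivalent, written $x\sim_{\mathrm{abl}}y$, if $|x|_c=|y|_c$ for all $c\in\Sigma$. For words $u,v$: a pair $(x,y)$ is an internal abelian-border of $(u,v)$ if $x$ is a nonempty proper suffix of $u$, $y$ is a proper prefix of $v$, and $x\sim_{\mathrm{abl}}y$; it is an external abelian-border of $(u,v)$ if $x$ is a nonempty proper prefix of $u$, $y$ is a proper suffix of $v$, and $x\sim_{\mathrm{abl}}y$. The pair $(u,v)$ is mutually abelian-bordered (MAB) if it has both an internal and an external abelian-border, and mutually abelian-unbordered (MAU) if it has neither. If $(u,v)$ has an internal abelian-border, $\mathrm{sb}(u,v)$ denotes its internal abelian-border $(x,y)$ of minimal length and $\mathrm{lsb}(u,v)=|x|$ is that minimal length. *)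

theory Defs
  imports Main "HOL-Library.Sublist"
begin

datatype letter = a | b

type_synonym word = "letter list"

definition occ :: "word \<Rightarrow> letter \<Rightarrow> nat" where
  "occ w c = count_list w c"

definition abel_eq :: "word \<Rightarrow> word \<Rightarrow> bool" where
  "abel_eq x y \<longleftrightarrow> (\<forall>c. occ x c = occ y c)"

definition internal_border :: "word \<Rightarrow> word \<Rightarrow> word \<Rightarrow> word \<Rightarrow> bool" where
  "internal_border u v x y \<longleftrightarrow>
     x \<noteq> [] \<and> suffix x u \<and> length x < length u \<and>
     prefix y v \<and> length y < length v \<and> abel_eq x y"

definition external_border :: "word \<Rightarrow> word \<Rightarrow> word \<Rightarrow> word \<Rightarrow> bool" where
  "external_border u v x y \<longleftrightarrow>
     x \<noteq> [] \<and> prefix x u \<and> length x < length u \<and>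
     suffix y v \<and> length y < length v \<and> abel_eq x y"

definition has_internal_border :: "word \<Rightarrow> word \<Rightarrow> bool" where
  "has_internal_border u v \<longleftrightarrow> (\<exists>x y. internal_border u v x y)"

definition has_external_border :: "word \<Rightarrow> word \<Rightarrow> bool" where
  "has_external_border u v \<longleftrightarrow> (\<exists>x y. external_border u v x y)"

definition MAB :: "word \<Rightarrow> word \<Rightarrow> bool" where
  "MAB u v \<longleftrightarrow> has_internal_border u v \<and> has_external_border u v"

text \<open>Length of the shortest internal abelian-border (meaningful when one exists).\<close>
definition lsb :: "word \<Rightarrow> word \<Rightarrow> nat" where
  "lsb u v = (LEAST k. \<exists>x y. internal_border u v x y \<and> length x = k)"

end

theory Submission
  imports Defs
begin

text \<open>Compare the number of a's in the length-m suffix of u with that in the length-m prefix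
  of v; the difference F(m) vanishes exactly at the internal abelian-borders of (u,v), so
  lsb(u,v) is the first zero of F in (0,n), and F moves by at most 1 per step. Counting a's in
  u and v shows that the corresponding function G for (v,u) satisfies G(n-m) = F(m) + D for a
  constant D. Hence G(n-i) = D is the a-surplus of \<alpha>' over \<alpha>, F(n-j) = -D, and F avoids the
  value -D on (n-j, i] because G has no zero in (0,j). A walk of unit steps that starts at
  -D = \<plusminus>1 at n-j and then avoids -D can only move away from 0 first, after which it must
  return through -D before reaching 0; so it reaches 0 at i only if i = n-j+1.\<close>

lemma int_walk_intermed_val:
  fixes f :: "nat \<Rightarrow> int"
  assumes "\<And>t. m \<le> t \<Longrightarrow> t < n \<Longrightarrow> \<bar>f (Suc t) - f t\<bar> \<le> 1" "m \<le> n"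
    and "min (f m) (f n) \<le> k" "k \<le> max (f m) (f n)"
  shows "\<exists>t. m \<le> t \<and> t \<le> n \<and> f t = k"
proof (cases "f m \<le> f n")
  case True
  then show ?thesis
    using nat_intermed_int_val[of m n f k] assms by auto
next
  case False
  then have "\<exists>t. m \<le> t \<and> t \<le> n \<and> - f t = - k"
    using nat_intermed_int_val[of m n "\<lambda>t. - f t" "- k"] assms by (auto simp: abs_minus_commute)
  then show ?thesis by auto
qed

lemma int_walk_abs_eq_1_iff_first_zero_Suc:
  fixes f :: "nat \<Rightarrow> int"
  assumes steps: "\<And>t. p \<le> t \<Longrightarrow> t < q \<Longrightarrow> \<bar>f (Suc t) - f t\<bar> \<le> 1"
    and "p < q" and zero: "f q = 0"
    and nonzero: "\<And>t. p < t \<Longrightarrow> t < q \<Longrightarrow> f t \<noteq> 0"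
    and avoid: "\<And>t. p < t \<Longrightarrow> t \<le> q \<Longrightarrow> f t \<noteq> f p"
  shows "\<bar>f p\<bar> = 1 \<longleftrightarrow> q = Suc p"
proof
  assume unit: "\<bar>f p\<bar> = 1"
  show "q = Suc p"
  proof (rule ccontr)
    assume "q \<noteq> Suc p"
    with \<open>p < q\<close> have "Suc p < q" by simp
    have "f (Suc p) \<noteq> 0" "f (Suc p) \<noteq> f p" "\<bar>f (Suc p) - f p\<bar> \<le> 1"
      using nonzero avoid steps \<open>Suc p < q\<close> by auto
    with unit have "f (Suc p) = 2 * f p" by linarith
    with unit zero have "min (f (Suc p)) (f q) \<le> f p" "f p \<le> max (f (Suc p)) (f q)"
      by linarith+
    then obtain t where "Suc p \<le> t" "t \<le> q" "f t = f p"
      using int_walk_intermed_val[of "Suc p" q f "f p"] steps \<open>Suc p < q\<close> by auto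
    with avoid show False by auto
  qed
next
  assume "q = Suc p"
  moreover have "f p \<noteq> 0"
    using avoid[of q] zero \<open>p < q\<close> by auto
  ultimately show "\<bar>f p\<bar> = 1"
    using steps[of p] zero by auto
qed

definition border_defect :: "word \<Rightarrow> word \<Rightarrow> nat \<Rightarrow> int" where
  "border_defect u v m = int (occ (drop (length u - m) u) a) - int (occ (take m v) a)"

lemma occ_a_add_occ_b: "occ w a + occ w b = length w"
  unfolding occ_def by (induction w) (auto split: letter.splits, metis letter.exhaust)

lemma occ_take_add_occ_drop: "occ (take m w) c + occ (drop m w) c = occ w c"
  unfolding occ_def by (metis append_take_drop_id count_list_append)

lemma abel_eq_length: "abel_eq x y \<Longrightarrow> length x = length y"
  unfolding abel_eq_def by (metis occ_a_add_occ_b)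

lemma abel_eq_iff_occ_a:
  assumes "length x = length y"
  shows "abel_eq x y \<longleftrightarrow> occ x a = occ y a"
proof
  assume "occ x a = occ y a"
  moreover from this have "occ x b = occ y b"
    using assms occ_a_add_occ_b[of x] occ_a_add_occ_b[of y] by simp
  ultimately show "abel_eq x y"
    unfolding abel_eq_def by (metis letter.exhaust)
qed (simp add: abel_eq_def)

lemma internal_border_iff_border_defect:
  assumes "length u = n" "length v = n"
  shows "internal_border u v x y \<longleftrightarrow>
    0 < length x \<and> length x < n \<and> x = drop (n - length x) u \<and> y = take (length x) v \<and>
    border_defect u v (length x) = 0"
proof
  assume border: "internal_border u v x y"
  then have "length y = length x"
    unfolding internal_border_def using abel_eq_length by metis
  moreover have "x = drop (n - length x) u" "y = take (length y) v"
    using border assms unfolding internal_border_def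
    by (metis suffix_take diff_diff_cancel suffix_length_le append_take_drop_id same_append_eq
          length_drop, metis prefix_def append_eq_conv_conj)
  ultimately show "0 < length x \<and> length x < n \<and> x = drop (n - length x) u \<and>
      y = take (length x) v \<and> border_defect u v (length x) = 0"
    using border assms unfolding internal_border_def abel_eq_def border_defect_def by auto
next
  assume "0 < length x \<and> length x < n \<and> x = drop (n - length x) u \<and>
      y = take (length x) v \<and> border_defect u v (length x) = 0"
  then show "internal_border u v x y"
    using assms unfolding internal_border_def border_defect_def
    by (auto simp: take_is_prefix abel_eq_iff_occ_a) (metis suffix_drop)
qed

lemma lsb_first_zero:
  assumes "length u = n" "length v = n" "has_internal_border u v"
  shows "0 < lsb u v" "lsb u v < n" "border_defect u v (lsb u v) = 0"
    and "\<And>m. 0 < m \<Longrightarrow> m < lsb u v \<Longrightarrow> border_defect u v m \<noteq> 0"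
proof -
  define zero where "zero m \<longleftrightarrow> 0 < m \<and> m < n \<and> border_defect u v m = 0" for m
  have border_iff_zero: "(\<exists>x y. internal_border u v x y \<and> length x = m) \<longleftrightarrow> zero m" for m
  proof
    assume "\<exists>x y. internal_border u v x y \<and> length x = m"
    then show "zero m"
      unfolding zero_def using internal_border_iff_border_defect[OF assms(1,2)] by blast
  next
    assume "zero m"
    then have "internal_border u v (drop (n - m) u) (take m v)" "length (drop (n - m) u) = m"
      unfolding zero_def using internal_border_iff_border_defect[OF assms(1,2)] assms(1) by auto
    then show "\<exists>x y. internal_border u v x y \<and> length x = m" by blast
  qed
  then have lsb: "lsb u v = Least zero"
    unfolding lsb_def by simp
  obtain m where "zero m"
    using assms(3) border_iff_zero unfolding has_internal_border_def by blast
  then have "zero (lsb u v)"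
    unfolding lsb by (rule LeastI)
  then show "0 < lsb u v" "lsb u v < n" "border_defect u v (lsb u v) = 0"
    unfolding zero_def by simp_all
  show "border_defect u v m \<noteq> 0" if "0 < m" "m < lsb u v" for m
    using that not_less_Least[of m zero] \<open>lsb u v < n\<close> unfolding lsb zero_def by auto
qed

lemma external_border_iff_internal_border_swap:
  "external_border u v x y \<longleftrightarrow> internal_border v u y x"
  unfolding external_border_def internal_border_def
  by (metis abel_eq_length abel_eq_def length_greater_0_conv)

lemma MAB_imp_internal_borders:
  "MAB u v \<Longrightarrow> has_internal_border u v \<and> has_internal_border v u"
  unfolding MAB_def has_external_border_def has_internal_border_def
  using external_border_iff_internal_border_swap by blast

lemma border_defect_Suc_abs:
  assumes "length u = n" "length v = n" "m < n"
  shows "\<bar>border_defect u v (Suc m) - border_defect u v m\<bar> \<le> 1"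
proof -
  have "drop (n - Suc m) u = u ! (n - Suc m) # drop (n - m) u"
    using assms by (metis Cons_nth_drop_Suc Suc_diff_Suc diff_less zero_less_Suc less_le_trans Suc_leI)
  moreover have "take (Suc m) v = take m v @ [v ! m]"
    using assms by (simp add: take_Suc_conv_app_nth)
  ultimately have "border_defect u v (Suc m) - border_defect u v m =
      int (count_list [u ! (n - Suc m)] a) - int (count_list [v ! m] a)"
    using assms unfolding border_defect_def occ_def by simp
  then show ?thesis by simp
qed

lemma border_defect_swap:
  assumes "length u = n" "length v = n" "m \<le> n"
  shows "border_defect v u (n - m) = border_defect u v m + (int (occ v a) - int (occ u a))"
  using assms occ_take_add_occ_drop[of m v a] occ_take_add_occ_drop[of "n - m" u a]
  unfolding border_defect_def by simp

theorem mainTheorem4: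
  fixes u v \<alpha> \<gamma> \<beta> \<alpha>' \<gamma>' \<beta>' :: word and n i j :: nat
  assumes "n \<ge> 3"
    and "length u = n" and "length v = n"
    and "MAB u v"
    and "i = lsb u v" and "j = lsb v u"
    and "i + j > n"
    and "u = \<alpha> @ \<gamma> @ \<beta>" and "v = \<beta>' @ \<gamma>' @ \<alpha>'"
    and "length \<alpha> = n - i" and "length \<alpha>' = n - i"
    and "length \<gamma> = i + j - n" and "length \<gamma>' = i + j - n"
    and "length \<beta> = n - j" and "length \<beta>' = n - j"
  shows "(\<forall>c \<in> {a, b}. \<bar>int (occ \<alpha> c) - int (occ \<alpha>' c)\<bar> = 1) \<longleftrightarrow> i + j - n = 1"
proof -
  note lu = assms(2) and lv = assms(3)
  define F where "F = border_defect u v"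
  define G where "G = border_defect v u"
  have borders: "has_internal_border u v" "has_internal_border v u"
    using MAB_imp_internal_borders[OF assms(4)] by auto
  note I = lsb_first_zero[OF lu lv borders(1), folded assms(5) F_def]
    and J = lsb_first_zero[OF lv lu borders(2), folded assms(6) G_def]
  have "\<alpha> = take (n - i) u" "\<alpha>' = drop i v"
    using assms(7-11,13,15) I(2) J(2) by simp_all
  then have "G (n - i) = int (occ \<alpha>' a) - int (occ \<alpha> a)"
    unfolding G_def border_defect_def using lv I(2) by simp
  moreover have "G (n - i) = - F (n - j)"
    using border_defect_swap[OF lu lv, of i] border_defect_swap[OF lu lv, of "n - j"] I J
    unfolding F_def G_def by simp
  moreover have "occ \<alpha> a + occ \<alpha> b = occ \<alpha>' a + occ \<alpha>' b"
    using occ_a_add_occ_b assms(10,11) by metis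
  ultimately have "(\<forall>c \<in> {a, b}. \<bar>int (occ \<alpha> c) - int (occ \<alpha>' c)\<bar> = 1) \<longleftrightarrow> \<bar>F (n - j)\<bar> = 1"
    by auto
  also have "\<dots> \<longleftrightarrow> i = Suc (n - j)"
  proof (rule int_walk_abs_eq_1_iff_first_zero_Suc)
    show "F t \<noteq> F (n - j)" if "n - j < t" "t \<le> i" for t
      using border_defect_swap[OF lu lv, of t] border_defect_swap[OF lu lv, of "n - j"] I(2) J that
      unfolding F_def G_def by force
  qed (use I J(2) assms(7) border_defect_Suc_abs[OF lu lv] in \<open>auto simp: F_def\<close>)
  also have "\<dots> \<longleftrightarrow> i + j - n = 1"
    using assms(7) J(2) by arith
  finally show ?thesis .
qed

end
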